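(* Let $\theta\colon\mathbb F(A)\curvearrowright\Omega$ be a convex subshift over a finite alphabet $A$ and $n\ge1$. Then the $n$-ball convex subshift $\theta^{[n]}$ is conjugate to the $n$-fold iterated $1$-ball convex subshift $\theta^{[1][1]\cdots[1]}$ (the $1$-ball construction applied $n$ times).
   Context: Convex subshifts. Let $A$ be a finite alphabet, $\mathbb F=\mathbb F(A)$. $\mathcal C=\mathcal C(A)$ is the set of subsets $\xi\subseteq\mathbb F$ with $1\in\xi$ that are right-convex: whenever a reduced word $a_m^{\varepsilon_m}\cdots a_1^{\varepsilon_1}$ ($a_i\in A$, $\varepsilon_i=\pm1$) lies in $\xi$, so does $a_k^{\varepsilon_k}\cdots a_1^{\varepsilon_1}$ for all $k<m$; topology from $\{0,1\}^{\mathbb F}$. Full convex shift: partial action of $\mathbb F$ on $\mathcal C$ with domains $\mathcal C_\alpha=\{\xi:\alpha^{-1}\in\xi\}$, $\alpha.\xi=\xi\alpha^{-1}$ for $\alpha\in\xi$. A convex subshift is the restriction to a closed invariant $\Omega\subseteq\mathcal C$. For $\xi\in\mathcal C$, $\xi^n=\{\alpha\in\xi:|\alpha|\le n\}$. $n$-ball subshift: $A^{[n:\Omega]}$ is the finite set of formal symbols $[(a.\xi)^n\xleftarrow{a}\xi^n]$ with $\xi\in\Omega$, $a\in A$, $a\in\xi$ (determined by the triple $(B,a,B')$), with $[B'\xleftarrow{a^{-1}}B]:=[B\xleftarrow{a}B']^{-1}$ in $\mathbb F^{[n:\Omega]}=\mathbb F(A^{[n:\Omega]})$. For $\xi\in\Omega$,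 $\alpha=s_m\cdots s_1\in\xi$ reduced, $B_k=((s_k\cdots s_1).\xi)^n$, $\phi_n(\xi,\alpha)=[B_m\xleftarrow{s_m}B_{m-1}]\cdots[B_1\xleftarrow{s_1}B_0]$, $\phi_n(\xi,1)=1$, $\phi_n(\xi)=\{\phi_n(\xi,\alpha):\alpha\in\xi\}$. $\theta^{[n]}$ is the restriction of the full convex shift on $A^{[n:\Omega]}$ to $\Omega^{[n]}:=\phi_n(\Omega)$; it is itself a convex subshift, so the construction can be iterated. A conjugacy between partial actions $\theta\colon G\curvearrowright\Omega$, $\theta'\colon H\curvearrowright\Omega'$ is a pair $(\varphi,\Psi)$ with $\Psi\colon G\to H$ a group isomorphism and $\varphi\colon\Omega\to\Omega'$ a homeomorphism such that $\varphi(\Omega_g)=\Omega'_{\Psi(g)}$ and $\varphi(g.x)=\Psi(g).\varphi(x)$ for all $g$ and $x\in\Omega_{g^{-1}}$ (here $\Omega_g$ is the domain of $\theta_{g^{-1}}$). *)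

theory Defs
  imports "HOL-Analysis.Analysis" "HOL-Library.FSet"
begin

(* Letters: a universal symbol type containing the base letters and the
   n-ball symbols [B <-a- B'] (triples (B,a,B') with B,B' finite sets of words),
   so that the ball construction can be iterated inside one type. *)
datatype 'a sym = Base 'a
  | Tri "('a sym \<times> bool) list fset" "'a sym" "('a sym \<times> bool) list fset"

(* A word a_m^{e_m} ... a_1^{e_1} is the list [(a_m,e_m),...,(a_1,e_1)]
   in written order; e = True means exponent +1, False means -1. *)
type_synonym 's word = "('s \<times> bool) list"

definition reduced :: "'s word \<Rightarrow> bool" where
  "reduced w \<longleftrightarrow> (\<forall>i. Suc i < length w \<longrightarrow>
      \<not> (fst (w!i) = fst (w!Suc i) \<and> snd (w!i) \<noteq> snd (w!Suc i)))"

definition FG :: "'s set \<Rightarrow> 's word set" where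
  "FG A = {w. reduced w \<and> set (map fst w) \<subseteq> A}"

fun canc :: "'s word \<Rightarrow> 's word \<Rightarrow> 's word" where
  "canc [] ys = ys"
| "canc (x#xs) [] = rev (x#xs)"
| "canc (x#xs) (y#ys) =
     (if fst x = fst y \<and> snd x \<noteq> snd y then canc xs ys else rev (x#xs) @ y # ys)"

definition mulw :: "'s word \<Rightarrow> 's word \<Rightarrow> 's word" where
  "mulw u v = canc (rev u) v"

definition invw :: "'s word \<Rightarrow> 's word" where
  "invw u = rev (map (\<lambda>(a,e). (a, \<not> e)) u)"

definition convex :: "'s set \<Rightarrow> 's word set \<Rightarrow> bool" where
  "convex A \<xi> \<longleftrightarrow> \<xi> \<subseteq> FG A \<and> [] \<in> \<xi> \<and> (\<forall>w\<in>\<xi>. \<forall>k. drop k w \<in> \<xi>)"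

definition CC :: "'s set \<Rightarrow> 's word set set" where
  "CC A = {\<xi>. convex A \<xi>}"

(* topology from {0,1}^F: pullback of the product topology along indicator maps *)
definition cfg_top :: "'s word set topology" where
  "cfg_top = pullback_topology UNIV (\<lambda>\<xi> w. w \<in> \<xi>)
              (product_topology (\<lambda>_. (euclidean :: bool topology)) UNIV)"

(* full convex shift: alpha.xi = xi alpha^{-1}, defined for alpha in xi *)
definition act :: "'s word \<Rightarrow> 's word set \<Rightarrow> 's word set" where
  "act \<alpha> \<xi> = (\<lambda>\<gamma>. mulw \<gamma> (invw \<alpha>)) ` \<xi>"

definition convex_subshift :: "'s set \<Rightarrow> 's word set set \<Rightarrow> bool" where
  "convex_subshift A \<Omega> \<longleftrightarrow> \<Omega> \<subseteq> CC A
     \<and> closedin (subtopology cfg_top (CC A)) \<Omega>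
     \<and> (\<forall>\<xi>\<in>\<Omega>. \<forall>\<alpha>\<in>\<xi>. act \<alpha> \<xi> \<in> \<Omega>)"

(* conjugacy of the restricted convex shifts (A,Omega) and (A',Omega');
   Omega_g = {xi. g^{-1} in xi}, and g.x defined for x in Omega_{g^{-1}} = {xi. g in xi} *)
definition conjugate :: "'s set \<Rightarrow> 's word set set \<Rightarrow> 't set \<Rightarrow> 't word set set \<Rightarrow> bool" where
  "conjugate A \<Omega> A' \<Omega>' \<longleftrightarrow> (\<exists>\<phi> \<Psi>.
      bij_betw \<Psi> (FG A) (FG A')
    \<and> (\<forall>x\<in>FG A. \<forall>y\<in>FG A. \<Psi> (mulw x y) = mulw (\<Psi> x) (\<Psi> y))
    \<and> homeomorphic_map (subtopology cfg_top \<Omega>) (subtopology cfg_top \<Omega>') \<phi>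
    \<and> (\<forall>g\<in>FG A. \<phi> ` {\<xi>\<in>\<Omega>. invw g \<in> \<xi>} = {\<eta>\<in>\<Omega>'. invw (\<Psi> g) \<in> \<eta>})
    \<and> (\<forall>g\<in>FG A. \<forall>\<xi>\<in>\<Omega>. g \<in> \<xi> \<longrightarrow> \<phi> (act g \<xi>) = act (\<Psi> g) (\<phi> \<xi>)))"

definition ball :: "nat \<Rightarrow> 's word set \<Rightarrow> 's word fset" where
  "ball n \<xi> = Abs_fset {\<alpha>\<in>\<xi>. length \<alpha> \<le> n}"

definition ball_alph :: "nat \<Rightarrow> 'a sym set \<Rightarrow> 'a sym word set set \<Rightarrow> 'a sym set" where
  "ball_alph n A \<Omega> = {Tri (ball n (act [(a,True)] \<xi>)) a (ball n \<xi>) | \<xi> a.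
       \<xi> \<in> \<Omega> \<and> a \<in> A \<and> [(a,True)] \<in> \<xi>}"

fun ball_letter :: "'a sym \<times> bool \<Rightarrow> 'a sym word fset \<Rightarrow> 'a sym word fset \<Rightarrow> 'a sym \<times> bool" where
  "ball_letter (a, True) Bk Bk1 = (Tri Bk a Bk1, True)"
| "ball_letter (a, False) Bk Bk1 = (Tri Bk1 a Bk, False)"

(* phi_n(xi, alpha); alpha!i = s_k with k = m - i and drop i alpha = s_k ... s_1 *)
definition phiw :: "nat \<Rightarrow> 'a sym word set \<Rightarrow> 'a sym word \<Rightarrow> 'a sym word" where
  "phiw n \<xi> \<alpha> = map (\<lambda>i. ball_letter (\<alpha>!i) (ball n (act (drop i \<alpha>) \<xi>))
                                          (ball n (act (drop (Suc i) \<alpha>) \<xi>)))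
                     [0..<length \<alpha>]"

definition phi :: "nat \<Rightarrow> 'a sym word set \<Rightarrow> 'a sym word set" where
  "phi n \<xi> = phiw n \<xi> ` \<xi>"

definition ball_shift :: "nat \<Rightarrow> 'a sym word set set \<Rightarrow> 'a sym word set set" where
  "ball_shift n \<Omega> = phi n ` \<Omega>"

definition ball1_step :: "'a sym set \<times> 'a sym word set set \<Rightarrow> 'a sym set \<times> 'a sym word set set" where
  "ball1_step p = (ball_alph 1 (fst p) (snd p), ball_shift 1 (snd p))"

end

theory Submission
  imports Defs
begin

text \<open>Both sides are recodings of \<open>\<Omega>\<close>. A word \<open>\<alpha> \<in> \<xi>\<close> is a path in the orbit of \<open>\<xi>\<close>;
  relabelling each of its edges \<open>a\<close> at \<open>\<zeta>\<close> by \<open>F \<zeta> a\<close> turns \<open>\<xi>\<close> into a configuration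
  \<open>recode F \<xi>\<close>, and recoding commutes with the shift. The \<open>n\<close>-ball shift is the recoding by
  \<open>F \<zeta> a = [(a.\<zeta>)\<^sup>n \<leftarrow>a\<leftarrow> \<zeta>\<^sup>n]\<close>, and by equivariance the \<open>k\<close>-fold \<open>1\<close>-ball iterate is the
  recoding by a recursively defined label \<open>iter_label k\<close>. By induction on \<open>k\<close>, two edges get the
  same iterated label iff they carry the same letter and the \<open>k\<close>-balls at both of their ends agree:
  a \<open>1\<close>-ball of a recoded configuration sees the labels of the edges at the origin, hence the
  \<open>k\<close>-balls one step away, i.e. the \<open>(k+1)\<close>-ball. For \<open>k = n\<close> this is exactly when the \<open>n\<close>-ball
  labels agree, so the two alphabets correspond under a bijection, and renaming letters along a
  bijection is a conjugacy.\<close>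

section \<open>Free group arithmetic on reduced words\<close>

definition cancels :: "'s \<times> bool \<Rightarrow> 's \<times> bool \<Rightarrow> bool" where
  "cancels x y \<longleftrightarrow> fst x = fst y \<and> snd x \<noteq> snd y"

definition inv_letter :: "'s \<times> bool \<Rightarrow> 's \<times> bool" where
  "inv_letter x = (fst x, \<not> snd x)"

lemma cancels_sym: "cancels x y = cancels y x"
  by (auto simp: cancels_def)

lemma inv_letter_inv_letter [simp]: "inv_letter (inv_letter s) = s"
  by (simp add: inv_letter_def)

lemma cancels_inv_letter [simp]: "cancels s (inv_letter s)" "cancels (inv_letter s) s"
  by (auto simp: cancels_def inv_letter_def)

lemma reduced_Nil [simp]: "reduced []" and reduced_singleton [simp]: "reduced [x]"
  by (auto simp: reduced_def)

lemma reduced_Cons_Cons [simp]: "reduced (x # y # w) \<longleftrightarrow> \<not> cancels x y \<and> reduced (y # w)"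
proof
  assume r: "reduced (x # y # w)"
  have "\<not> cancels x y"
    using r[unfolded reduced_def, rule_format, of 0] by (auto simp: cancels_def)
  moreover have "reduced (y # w)" unfolding reduced_def
  proof (intro allI impI)
    fix i assume "Suc i < length (y # w)"
    then show "\<not> (fst ((y # w) ! i) = fst ((y # w) ! Suc i) \<and> snd ((y # w) ! i) \<noteq> snd ((y # w) ! Suc i))"
      using r[unfolded reduced_def, rule_format, of "Suc i"] by auto
  qed
  ultimately show "\<not> cancels x y \<and> reduced (y # w)" by simp
next
  assume h: "\<not> cancels x y \<and> reduced (y # w)"
  show "reduced (x # y # w)" unfolding reduced_def
  proof (intro allI impI)
    fix i assume i: "Suc i < length (x # y # w)"
    show "\<not> (fst ((x # y # w) ! i) = fst ((x # y # w) ! Suc i) \<and> snd ((x # y # w) ! i) \<noteq> snd ((x # y # w) ! Suc i))"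
    proof (cases i)
      case 0
      then show ?thesis using h by (auto simp: cancels_def)
    next
      case (Suc j)
      then show ?thesis using h[THEN conjunct2, unfolded reduced_def, rule_format, of j] i by auto
    qed
  qed
qed

lemma reduced_Cons: "reduced (x # w) \<longleftrightarrow> reduced w \<and> (w \<noteq> [] \<longrightarrow> \<not> cancels x (hd w))"
  by (cases w) auto

lemma reduced_append:
  "reduced (u @ v) \<longleftrightarrow> reduced u \<and> reduced v \<and> (u \<noteq> [] \<and> v \<noteq> [] \<longrightarrow> \<not> cancels (last u) (hd v))"
  by (induction u) (auto simp: reduced_Cons)

lemma reduced_drop: "reduced w \<Longrightarrow> reduced (drop k w)"
  by (metis append_take_drop_id reduced_append)

lemma reduced_rev: "reduced (rev w) \<longleftrightarrow> reduced w"
  by (induction w) (auto simp: reduced_append reduced_Cons cancels_sym hd_rev last_rev)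

lemma invw_conv_inv_letter: "invw u = rev (map inv_letter u)"
  by (simp add: invw_def inv_letter_def case_prod_beta')

lemma reduced_map_inv_letter: "reduced (map inv_letter w) \<longleftrightarrow> reduced w"
  by (induction w) (auto simp: reduced_Cons inv_letter_def cancels_def hd_map)

lemma reduced_invw [simp]: "reduced (invw w) \<longleftrightarrow> reduced w"
  by (simp add: invw_conv_inv_letter reduced_rev reduced_map_inv_letter)

lemma invw_append: "invw (u @ v) = invw v @ invw u"
  by (simp add: invw_conv_inv_letter)

lemma invw_invw [simp]: "invw (invw u) = u"
  by (simp add: invw_conv_inv_letter rev_map comp_def)

lemma invw_Nil [simp]: "invw [] = []" and invw_singleton [simp]: "invw [s] = [inv_letter s]"
  by (simp_all add: invw_conv_inv_letter)

lemma invw_FG: "g \<in> FG B \<Longrightarrow> invw g \<in> FG B"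
  by (auto simp: FG_def invw_conv_inv_letter inv_letter_def reduced_rev reduced_map_inv_letter)

text \<open>Associativity of \<open>mulw\<close> comes from writing it as a fold of left multiplication by
  single letters.\<close>

definition cons_red :: "'s \<times> bool \<Rightarrow> 's word \<Rightarrow> 's word" where
  "cons_red s w = (case w of [] \<Rightarrow> [s] | t # w' \<Rightarrow> if cancels s t then w' else s # w)"

lemma cons_red_Nil [simp]: "cons_red s [] = [s]"
  and cons_red_Cons [simp]: "cons_red s (t # w) = (if cancels s t then w else s # t # w)"
  by (simp_all add: cons_red_def)

lemma reduced_cons_red: "reduced w \<Longrightarrow> reduced (cons_red s w)"
  by (cases w) (auto simp: reduced_Cons)

lemma reduced_foldr_cons_red: "reduced w \<Longrightarrow> reduced (foldr cons_red u w)"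
  by (induction u) (auto simp: reduced_cons_red)

lemma set_cons_red: "set (cons_red s w) \<subseteq> insert s (set w)"
  by (cases w) auto

lemma set_foldr_cons_red: "set (foldr cons_red x y) \<subseteq> set x \<union> set y"
  by (induction x) (use set_cons_red in fastforce)+

lemma cons_red_cancel:
  assumes r: "reduced v" and c: "cancels s t"
  shows "cons_red s (cons_red t v) = v"
proof (cases v)
  case (Cons t' v')
  show ?thesis
  proof (cases "cancels t t'")
    case True
    then have "s = t'" using c by (cases s, cases t, cases t') (auto simp: cancels_def)
    then show ?thesis using r True Cons by (cases v') (auto simp: reduced_Cons)
  next
    case False
    then show ?thesis using Cons c by simp
  qed
qed (use c in auto)

lemma foldr_cons_red_cons_red:
  assumes "reduced w" "reduced z"
  shows "foldr cons_red (cons_red s w) z = cons_red s (foldr cons_red w z)"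
proof (cases w)
  case (Cons t w')
  show ?thesis
  proof (cases "cancels s t")
    case True
    have "reduced (foldr cons_red w' z)" using assms reduced_foldr_cons_red by blast
    then show ?thesis using True Cons cons_red_cancel[OF _ True] by simp
  qed (simp add: Cons)
qed simp

lemma foldr_cons_red_assoc:
  "reduced y \<Longrightarrow> reduced z \<Longrightarrow>
    foldr cons_red (foldr cons_red x y) z = foldr cons_red x (foldr cons_red y z)"
  by (induction x) (auto simp: foldr_cons_red_cons_red reduced_foldr_cons_red)

lemma foldr_cons_red_reduced_append: "reduced (u @ v) \<Longrightarrow> foldr cons_red u v = u @ v"
proof (induction u)
  case (Cons s u)
  then have "foldr cons_red u v = u @ v" by (simp add: reduced_Cons)
  then show ?case using Cons.prems by (cases "u @ v") (auto simp: reduced_Cons)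
qed simp

lemma canc_conv_foldl:
  "reduced (rev xs) \<Longrightarrow> reduced y \<Longrightarrow> canc xs y = foldl (\<lambda>w s. cons_red s w) y xs"
proof (induction xs y rule: canc.induct)
  case (1 ys)
  then show ?case by simp
next
  case (2 x xs)
  have "foldl (\<lambda>w s. cons_red s w) [x] xs = foldr cons_red (rev xs) [x]"
    by (simp add: foldr_conv_foldl)
  also have "\<dots> = rev xs @ [x]"
    using 2 by (intro foldr_cons_red_reduced_append) simp
  finally show ?case by simp
next
  case (3 x xs y ys)
  have rxs: "reduced (rev xs)" using 3(2) by (simp add: reduced_append)
  show ?case
  proof (cases "cancels x y")
    case True
    then show ?thesis using 3 rxs by (simp add: cancels_def reduced_Cons)
  next
    case False
    have "foldl (\<lambda>w s. cons_red s w) (x # y # ys) xs = foldr cons_red (rev xs) (x # y # ys)"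
      by (simp add: foldr_conv_foldl)
    also have "\<dots> = rev xs @ x # y # ys"
      using 3(2,3) False by (intro foldr_cons_red_reduced_append) (auto simp: reduced_append)
    finally show ?thesis using False by (auto simp: cancels_def)
  qed
qed

lemma mulw_conv_foldr: "reduced x \<Longrightarrow> reduced y \<Longrightarrow> mulw x y = foldr cons_red x y"
  by (simp add: mulw_def canc_conv_foldl reduced_rev foldr_conv_foldl)

lemma reduced_mulw: "reduced x \<Longrightarrow> reduced y \<Longrightarrow> reduced (mulw x y)"
  by (simp add: mulw_conv_foldr reduced_foldr_cons_red)

lemma mulw_assoc:
  "reduced x \<Longrightarrow> reduced y \<Longrightarrow> reduced z \<Longrightarrow> mulw (mulw x y) z = mulw x (mulw y z)"
  by (simp add: mulw_conv_foldr reduced_foldr_cons_red foldr_cons_red_assoc)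

lemma mulw_reduced_append: "reduced (u @ v) \<Longrightarrow> mulw u v = u @ v"
  by (simp add: mulw_conv_foldr reduced_append foldr_cons_red_reduced_append)

lemma mulw_Nil_left [simp]: "mulw [] x = x"
  by (simp add: mulw_def)

lemma mulw_Nil_right [simp]: "mulw x [] = x"
  unfolding mulw_def by (cases "rev x") (auto simp: rev_swap)

lemma mulw_invw: "reduced w \<Longrightarrow> mulw w (invw w) = []"
proof -
  have cancel: "foldl (\<lambda>w s. cons_red s w) (map inv_letter xs @ z) xs = z" for xs z :: "'a word"
    by (induction xs) (auto simp: inv_letter_def cancels_def)
  assume "reduced w"
  then have "mulw w (invw w) = foldr cons_red w (invw w)" by (simp add: mulw_conv_foldr)
  also have "\<dots> = foldl (\<lambda>a s. cons_red s a) (map inv_letter (rev w) @ []) (rev w)"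
    by (simp add: foldr_conv_foldl invw_conv_inv_letter rev_map)
  also have "\<dots> = []" by (rule cancel)
  finally show ?thesis .
qed

lemma mulw_invw_left: "reduced w \<Longrightarrow> mulw (invw w) w = []"
  using mulw_invw[of "invw w"] by simp

lemma mulw_singleton_right:
  assumes r: "reduced d"
  shows "mulw d [t] = (if d \<noteq> [] \<and> cancels (last d) t then butlast d else d @ [t])"
proof (cases "d \<noteq> [] \<and> cancels (last d) t")
  case True
  obtain u x where d: "d = u @ [x]" using True by (metis append_butlast_last_id)
  have "mulw d [t] = foldr cons_red u (cons_red x [t])" using r by (simp add: mulw_conv_foldr d)
  also have "\<dots> = u"
    using True d r by (simp add: reduced_append foldr_cons_red_reduced_append[of u "[]", simplified])
  finally show ?thesis using True d by simp
next
  case False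
  then have "reduced (d @ [t])" using r by (auto simp: reduced_append)
  then show ?thesis using False mulw_reduced_append by metis
qed

lemma mulw_singleton_inv_letter: "mulw [s] [inv_letter s] = []" "mulw [inv_letter s] [s] = []"
  by (simp_all add: mulw_def inv_letter_def)

section \<open>The full convex shift\<close>

lemma act_Nil [simp]: "act [] X = X"
  by (simp add: act_def)

lemma act_subset_reduced: "X \<subseteq> Collect reduced \<Longrightarrow> reduced g \<Longrightarrow> act g X \<subseteq> Collect reduced"
  by (auto simp: act_def reduced_mulw)

lemma act_append:
  assumes X: "X \<subseteq> Collect reduced" and r: "reduced (x @ w)"
  shows "act (x @ w) X = act x (act w X)"
proof -
  have rx: "reduced x" and rw: "reduced w" using r by (auto simp: reduced_append)
  have "mulw (mulw g (invw w)) (invw x) = mulw g (invw (x @ w))" if "g \<in> X" for g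
  proof -
    have "mulw (mulw g (invw w)) (invw x) = mulw g (mulw (invw w) (invw x))"
      using that X rx rw by (intro mulw_assoc) auto
    also have "mulw (invw w) (invw x) = invw (x @ w)"
      using r by (simp add: invw_append[symmetric] mulw_reduced_append)
    finally show ?thesis .
  qed
  then show ?thesis by (simp add: act_def image_image cong: image_cong)
qed

lemma mem_act:
  assumes X: "X \<subseteq> Collect reduced" and g: "reduced g"
  shows "v \<in> act g X \<longleftrightarrow> reduced v \<and> mulw v g \<in> X"
proof
  assume "v \<in> act g X"
  then obtain y where y: "y \<in> X" "v = mulw y (invw g)" by (auto simp: act_def)
  have "mulw v g = mulw y (mulw (invw g) g)"
    using y X g by (simp only:) (intro mulw_assoc, auto)
  also have "\<dots> = y" using g by (simp add: mulw_invw_left)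
  finally show "reduced v \<and> mulw v g \<in> X" using y X g by (auto simp: reduced_mulw)
next
  assume h: "reduced v \<and> mulw v g \<in> X"
  have "mulw (mulw v g) (invw g) = v" using h g by (simp add: mulw_assoc mulw_invw)
  then show "v \<in> act g X" using h unfolding act_def by (metis image_eqI)
qed

lemma act_inv_letter_act:
  assumes X: "X \<subseteq> Collect reduced"
  shows "act [inv_letter s] (act [s] X) = X"
proof -
  have "mulw (mulw g [inv_letter s]) [s] = g" if "g \<in> X" for g
  proof -
    have "mulw (mulw g [inv_letter s]) [s] = mulw g (mulw [inv_letter s] [s])"
      using that X by (intro mulw_assoc) auto
    then show ?thesis by (simp add: mulw_singleton_inv_letter)
  qed
  then show ?thesis by (simp add: act_def image_image cong: image_cong)
qed

section \<open>Renaming the letters of a convex shift\<close>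

lemma cancels_apfst:
  "inj_on \<sigma> B \<Longrightarrow> fst x \<in> B \<Longrightarrow> fst y \<in> B \<Longrightarrow> cancels (apfst \<sigma> x) (apfst \<sigma> y) \<longleftrightarrow> cancels x y"
  by (auto simp: cancels_def apfst_def map_prod_def split: prod.splits dest: inj_onD)

lemma reduced_map_apfst:
  "inj_on \<sigma> B \<Longrightarrow> set (map fst w) \<subseteq> B \<Longrightarrow> reduced (map (apfst \<sigma>) w) \<longleftrightarrow> reduced w"
proof (induction w)
  case (Cons x w)
  then show ?case by (cases w) (auto simp: cancels_apfst)
qed simp

lemma map_apfst_cons_red:
  "inj_on \<sigma> B \<Longrightarrow> fst s \<in> B \<Longrightarrow> set (map fst w) \<subseteq> B \<Longrightarrow>
    map (apfst \<sigma>) (cons_red s w) = cons_red (apfst \<sigma> s) (map (apfst \<sigma>) w)"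
  by (cases w) (auto simp: cancels_apfst)

lemma map_apfst_foldr_cons_red:
  "inj_on \<sigma> B \<Longrightarrow> set (map fst x) \<subseteq> B \<Longrightarrow> set (map fst y) \<subseteq> B \<Longrightarrow>
    map (apfst \<sigma>) (foldr cons_red x y) = foldr cons_red (map (apfst \<sigma>) x) (map (apfst \<sigma>) y)"
proof (induction x)
  case (Cons s x)
  have "set (map fst (foldr cons_red x y)) \<subseteq> B"
    using set_foldr_cons_red[of x y] Cons.prems by force
  then show ?case using Cons by (simp add: map_apfst_cons_red)
qed simp

lemma map_apfst_mulw:
  assumes "inj_on \<sigma> B" "x \<in> FG B" "y \<in> FG B"
  shows "map (apfst \<sigma>) (mulw x y) = mulw (map (apfst \<sigma>) x) (map (apfst \<sigma>) y)"
proof -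
  have r: "reduced x" "reduced y" "set (map fst x) \<subseteq> B" "set (map fst y) \<subseteq> B"
    using assms by (auto simp: FG_def)
  then have "reduced (map (apfst \<sigma>) x)" "reduced (map (apfst \<sigma>) y)"
    using reduced_map_apfst[OF assms(1)] by auto
  then show ?thesis using r by (simp add: mulw_conv_foldr map_apfst_foldr_cons_red[OF assms(1)])
qed

lemma map_apfst_invw: "map (apfst \<sigma>) (invw g) = invw (map (apfst \<sigma>) g)"
  by (simp add: invw_conv_inv_letter rev_map inv_letter_def comp_def apfst_def map_prod_def
      split: prod.splits)

lemma map_apfst_inv_into_left:
  "inj_on \<sigma> B \<Longrightarrow> set (map fst w) \<subseteq> B \<Longrightarrow> map (apfst (inv_into B \<sigma>)) (map (apfst \<sigma>) w) = w"
  by (induction w) (auto simp: apfst_def map_prod_def inv_into_f_f split: prod.splits)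

lemma map_apfst_inv_into_right:
  "set (map fst w) \<subseteq> \<sigma> ` B \<Longrightarrow> map (apfst \<sigma>) (map (apfst (inv_into B \<sigma>)) w) = w"
  by (induction w) (auto simp: apfst_def map_prod_def f_inv_into_f split: prod.splits)

lemma map_apfst_FG: "inj_on \<sigma> B \<Longrightarrow> w \<in> FG B \<Longrightarrow> map (apfst \<sigma>) w \<in> FG (\<sigma> ` B)"
  using reduced_map_apfst by (fastforce simp: FG_def)

lemma bij_betw_map_apfst_FG:
  assumes inj: "inj_on \<sigma> B"
  shows "bij_betw (map (apfst \<sigma>)) (FG B) (FG (\<sigma> ` B))"
proof (rule bij_betw_byWitness[where f' = "map (apfst (inv_into B \<sigma>))"])
  have "inj_on (inv_into B \<sigma>) (\<sigma> ` B)" by (simp add: inj_on_inv_into)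
  then show "map (apfst (inv_into B \<sigma>)) ` FG (\<sigma> ` B) \<subseteq> FG B"
    using reduced_map_apfst[of "inv_into B \<sigma>" "\<sigma> ` B"] by (force simp: FG_def intro: inv_into_into)
  show "\<forall>w\<in>FG B. map (apfst (inv_into B \<sigma>)) (map (apfst \<sigma>) w) = w"
    using map_apfst_inv_into_left[OF inj] by (auto simp: FG_def)
  show "\<forall>w\<in>FG (\<sigma> ` B). map (apfst \<sigma>) (map (apfst (inv_into B \<sigma>)) w) = w"
    using map_apfst_inv_into_right by (auto simp: FG_def)
  show "map (apfst \<sigma>) ` FG B \<subseteq> FG (\<sigma> ` B)"
    using map_apfst_FG[OF inj] by blast
qed

lemma topspace_cfg_top [simp]: "topspace cfg_top = UNIV"
  by (simp add: cfg_top_def topspace_pullback_topology)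

lemma continuous_map_mem_cfg_top: "continuous_map cfg_top euclidean (\<lambda>\<xi>. u \<in> \<xi>)"
proof -
  have "continuous_map cfg_top euclidean ((\<lambda>f. f u) \<circ> (\<lambda>\<xi> w. w \<in> \<xi>))"
    unfolding cfg_top_def
    by (rule continuous_map_pullback) (rule continuous_map_product_projection, simp)
  then show ?thesis by (simp add: comp_def)
qed

text \<open>Membership of \<open>w\<close> in \<open>P ` \<eta>\<close> is membership of \<open>P' w\<close> in \<open>\<eta>\<close>, a coordinate of \<open>\<eta>\<close>.\<close>

lemma continuous_map_image_cfg_top:
  assumes left_inv: "\<And>v. v \<in> S \<Longrightarrow> P' (P v) = v" and sub: "\<And>\<eta>. \<eta> \<in> \<Theta> \<Longrightarrow> \<eta> \<subseteq> S"
  shows "continuous_map (subtopology cfg_top \<Theta>) cfg_top (\<lambda>\<eta>. P ` \<eta>)"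
proof -
  have "continuous_map (subtopology cfg_top \<Theta>) (product_topology (\<lambda>_. euclidean) UNIV)
      ((\<lambda>\<xi> w. w \<in> \<xi>) \<circ> (\<lambda>\<eta>. P ` \<eta>))"
    unfolding continuous_map_componentwise_UNIV
  proof
    fix w
    have eq: "w \<in> P ` \<eta> \<longleftrightarrow> (if w \<in> P ` S then P' w \<in> \<eta> else False)" if "\<eta> \<in> \<Theta>" for \<eta>
      using sub[OF that] left_inv by (auto simp: image_iff)
    have "continuous_map (subtopology cfg_top \<Theta>) euclidean
        (if w \<in> P ` S then (\<lambda>\<eta>. P' w \<in> \<eta>) else (\<lambda>_. False))"
      by (auto intro: continuous_map_from_subtopology continuous_map_mem_cfg_top)
    then show "continuous_map (subtopology cfg_top \<Theta>) euclidean
        (\<lambda>x. ((\<lambda>\<xi> w. w \<in> \<xi>) \<circ> (\<lambda>\<eta>. P ` \<eta>)) x w)"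
      by (rule continuous_map_eq) (simp add: eq)
  qed
  then have "continuous_map (subtopology cfg_top \<Theta>)
      (pullback_topology UNIV (\<lambda>\<xi> w. w \<in> \<xi>) (product_topology (\<lambda>_. euclidean) UNIV))
      (\<lambda>\<eta>. P ` \<eta>)"
    by (intro continuous_map_pullback') auto
  then show ?thesis by (simp only: cfg_top_def)
qed

lemma homeomorphic_map_image_cfg_top:
  assumes left_inv: "\<And>v. v \<in> S \<Longrightarrow> P' (P v) = v" and right_inv: "\<And>v. v \<in> S' \<Longrightarrow> P (P' v) = v"
    and maps_into: "P ` S \<subseteq> S'" and sub: "\<And>\<eta>. \<eta> \<in> \<Theta> \<Longrightarrow> \<eta> \<subseteq> S"
  shows "homeomorphic_map (subtopology cfg_top \<Theta>) (subtopology cfg_top ((\<lambda>\<eta>. P ` \<eta>) ` \<Theta>))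
           (\<lambda>\<eta>. P ` \<eta>)"
proof -
  have inv_image: "P' ` P ` \<eta> = \<eta>" if "\<eta> \<in> \<Theta>" for \<eta>
    using sub[OF that] left_inv by (force simp: image_image)
  have sub': "\<eta> \<subseteq> S'" if "\<eta> \<in> (\<lambda>\<eta>. P ` \<eta>) ` \<Theta>" for \<eta>
    using that sub maps_into by blast
  show ?thesis
    unfolding homeomorphic_map_maps homeomorphic_maps_def
  proof (intro exI[of _ "\<lambda>\<eta>. P' ` \<eta>"] conjI)
    show "continuous_map (subtopology cfg_top \<Theta>) (subtopology cfg_top ((\<lambda>\<eta>. P ` \<eta>) ` \<Theta>))
        (\<lambda>\<eta>. P ` \<eta>)"
      by (rule continuous_map_into_subtopology[OF continuous_map_image_cfg_top[of S P' P]])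
        (use left_inv sub in auto)
    show "continuous_map (subtopology cfg_top ((\<lambda>\<eta>. P ` \<eta>) ` \<Theta>)) (subtopology cfg_top \<Theta>)
        (\<lambda>\<eta>. P' ` \<eta>)"
      by (rule continuous_map_into_subtopology[OF continuous_map_image_cfg_top[of S' P P']])
        (use right_inv sub' inv_image in auto)
  qed (use inv_image in auto)
qed

lemma map_apfst_act:
  assumes inj: "inj_on \<sigma> B" and g: "g \<in> FG B" and \<xi>: "\<xi> \<subseteq> FG B"
  shows "map (apfst \<sigma>) ` act g \<xi> = act (map (apfst \<sigma>) g) (map (apfst \<sigma>) ` \<xi>)"
proof -
  have "map (apfst \<sigma>) (mulw \<gamma> (invw g)) = mulw (map (apfst \<sigma>) \<gamma>) (invw (map (apfst \<sigma>) g))"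
    if "\<gamma> \<in> \<xi>" for \<gamma>
    using map_apfst_mulw[OF inj] \<xi> that invw_FG[OF g] by (auto simp: map_apfst_invw)
  then show ?thesis by (auto simp: act_def image_image cong: image_cong)
qed

lemma conjugate_relabel:
  assumes inj: "inj_on \<sigma> B" and sub: "\<And>\<eta>. \<eta> \<in> \<Theta> \<Longrightarrow> \<eta> \<subseteq> FG B"
  shows "conjugate B \<Theta> (\<sigma> ` B) ((\<lambda>\<eta>. map (apfst \<sigma>) ` \<eta>) ` \<Theta>)"
  unfolding conjugate_def
proof (intro exI[of _ "\<lambda>\<eta>. map (apfst \<sigma>) ` \<eta>"] exI[of _ "map (apfst \<sigma>)"] conjI)
  let ?P = "map (apfst \<sigma>)"
  show bij: "bij_betw ?P (FG B) (FG (\<sigma> ` B))" by (rule bij_betw_map_apfst_FG[OF inj])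
  show "\<forall>x\<in>FG B. \<forall>y\<in>FG B. ?P (mulw x y) = mulw (?P x) (?P y)"
    using map_apfst_mulw[OF inj] by blast
  show "homeomorphic_map (subtopology cfg_top \<Theta>)
      (subtopology cfg_top ((\<lambda>\<eta>. ?P ` \<eta>) ` \<Theta>)) (\<lambda>\<eta>. ?P ` \<eta>)"
  proof (rule homeomorphic_map_image_cfg_top[where P' = "map (apfst (inv_into B \<sigma>))", OF _ _ _ sub])
    show "map (apfst (inv_into B \<sigma>)) (?P v) = v" if "v \<in> FG B" for v
      using that map_apfst_inv_into_left[OF inj] by (auto simp: FG_def)
    show "?P (map (apfst (inv_into B \<sigma>)) v) = v" if "v \<in> FG (\<sigma> ` B)" for v
      using that map_apfst_inv_into_right by (auto simp: FG_def)
    show "?P ` FG B \<subseteq> FG (\<sigma> ` B)" using map_apfst_FG[OF inj] by blast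
  qed
  have inj_P: "inj_on ?P (FG B)" using bij by (rule bij_betw_imp_inj_on)
  show "\<forall>g\<in>FG B. (\<lambda>\<eta>. ?P ` \<eta>) ` {\<xi> \<in> \<Theta>. invw g \<in> \<xi>} =
      {\<eta> \<in> (\<lambda>\<eta>. ?P ` \<eta>) ` \<Theta>. invw (?P g) \<in> \<eta>}"
  proof
    fix g assume g: "g \<in> FG B"
    have "invw g \<in> \<xi> \<longleftrightarrow> invw (?P g) \<in> ?P ` \<xi>" if "\<xi> \<in> \<Theta>" for \<xi>
      using sub[OF that] invw_FG[OF g] inj_P by (auto simp: inj_on_image_mem_iff map_apfst_invw[symmetric])
    then show "(\<lambda>\<eta>. ?P ` \<eta>) ` {\<xi> \<in> \<Theta>. invw g \<in> \<xi>} = {\<eta> \<in> (\<lambda>\<eta>. ?P ` \<eta>) ` \<Theta>. invw (?P g) \<in> \<eta>}"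
      by auto
  qed
  show "\<forall>g\<in>FG B. \<forall>\<xi>\<in>\<Theta>. g \<in> \<xi> \<longrightarrow> ?P ` act g \<xi> = act (?P g) (?P ` \<xi>)"
    using map_apfst_act[OF inj] sub by blast
qed

section \<open>Recoding the words of a configuration\<close>

text \<open>The \<open>i\<close>-th letter \<open>s\<close> of \<open>\<alpha>\<close>, read as an edge \<open>a\<^sup>\<plusminus>\<^sup>1\<close> of the orbit of \<open>\<xi>\<close>, joins
  \<open>act (drop (Suc i) \<alpha>) \<xi>\<close> to \<open>act (drop i \<alpha>) \<xi>\<close>; \<open>edge_tail\<close> is the end from which it is the
  positive letter \<open>a\<close>. Recoding relabels every edge by a function \<open>F\<close> of its tail and letter,
  as \<open>\<phi>\<^sub>n\<close> does with \<open>F \<zeta> a = [(a.\<zeta>)\<^sup>n \<leftarrow>a\<leftarrow> \<zeta>\<^sup>n]\<close>.\<close>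

definition edge_tail :: "'s word set \<Rightarrow> 's word \<Rightarrow> nat \<Rightarrow> 's word set" where
  "edge_tail \<xi> \<alpha> i = (if snd (\<alpha> ! i) then act (drop (Suc i) \<alpha>) \<xi> else act (drop i \<alpha>) \<xi>)"

definition recode_word :: "('s word set \<Rightarrow> 's \<Rightarrow> 't) \<Rightarrow> 's word set \<Rightarrow> 's word \<Rightarrow> 't word" where
  "recode_word F \<xi> \<alpha> =
     map (\<lambda>i. (F (edge_tail \<xi> \<alpha> i) (fst (\<alpha> ! i)), snd (\<alpha> ! i))) [0..<length \<alpha>]"

definition recode :: "('s word set \<Rightarrow> 's \<Rightarrow> 't) \<Rightarrow> 's word set \<Rightarrow> 't word set" where
  "recode F \<xi> = recode_word F \<xi> ` \<xi>"

lemma length_recode_word [simp]: "length (recode_word F \<xi> \<alpha>) = length \<alpha>"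
  by (simp add: recode_word_def)

lemma nth_recode_word:
  "i < length \<alpha> \<Longrightarrow> recode_word F \<xi> \<alpha> ! i = (F (edge_tail \<xi> \<alpha> i) (fst (\<alpha> ! i)), snd (\<alpha> ! i))"
  by (simp add: recode_word_def)

lemma recode_word_Nil [simp]: "recode_word F \<xi> [] = []"
  by (simp add: recode_word_def)

lemma recode_word_singleton:
  "recode_word F \<xi> [s] = [(F (if snd s then \<xi> else act [s] \<xi>) (fst s), snd s)]"
  by (simp add: recode_word_def edge_tail_def)

lemma recode_word_id: "recode_word (\<lambda>\<zeta> a. a) \<xi> \<alpha> = \<alpha>"
  by (rule nth_equalityI) (auto simp: nth_recode_word)

lemma drop_recode_word: "drop j (recode_word F \<xi> \<alpha>) = recode_word F \<xi> (drop j \<alpha>)"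
  by (rule nth_equalityI)
    (auto simp: nth_recode_word edge_tail_def add.commute[of j] add_Suc_right[symmetric]
      simp del: add_Suc_right)

lemma recode_word_append:
  assumes X: "X \<subseteq> Collect reduced" and r: "reduced (u @ w)"
  shows "recode_word F X (u @ w) = recode_word F (act w X) u @ recode_word F X w"
proof (rule nth_equalityI)
  fix i assume i: "i < length (recode_word F X (u @ w))"
  show "recode_word F X (u @ w) ! i = (recode_word F (act w X) u @ recode_word F X w) ! i"
  proof (cases "i < length u")
    case True
    have d: "drop (Suc i) (u @ w) = drop (Suc i) u @ w" "drop i (u @ w) = drop i u @ w"
      using True by auto
    have "reduced (drop (Suc i) u @ w)" "reduced (drop i u @ w)"
      using reduced_drop[OF r, of "Suc i"] reduced_drop[OF r, of i] d by auto
    then show ?thesis using True i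
      by (simp add: nth_recode_word edge_tail_def nth_append d act_append[OF X])
  next
    case False
    then have "drop (Suc i) (u @ w) = drop (Suc (i - length u)) w"
      "drop i (u @ w) = drop (i - length u) w"
      by (auto simp: Suc_diff_le)
    then show ?thesis using False i
      by (simp add: nth_recode_word edge_tail_def nth_append Suc_diff_le)
  qed
qed simp

lemma reduced_recode_word:
  assumes g: "\<And>\<zeta> a. g (F \<zeta> a) = a" and r: "reduced \<alpha>"
  shows "reduced (recode_word F \<xi> \<alpha>)"
  unfolding reduced_def
proof (intro allI impI notI)
  fix i assume i: "Suc i < length (recode_word F \<xi> \<alpha>)"
    and c: "fst (recode_word F \<xi> \<alpha> ! i) = fst (recode_word F \<xi> \<alpha> ! Suc i) \<and>
      snd (recode_word F \<xi> \<alpha> ! i) \<noteq> snd (recode_word F \<xi> \<alpha> ! Suc i)"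
  have "fst (\<alpha> ! i) = fst (\<alpha> ! Suc i)"
    using i arg_cong[where f = g, OF conjunct1[OF c]] by (simp add: nth_recode_word g)
  moreover have "snd (\<alpha> ! i) \<noteq> snd (\<alpha> ! Suc i)" using c i by (simp add: nth_recode_word)
  ultimately show False using r i unfolding reduced_def by auto
qed

lemma last_recode_word:
  assumes "\<alpha> \<noteq> []"
  obtains \<zeta> where "last (recode_word F \<xi> \<alpha>) = (F \<zeta> (fst (last \<alpha>)), snd (last \<alpha>))"
proof -
  have "recode_word F \<xi> \<alpha> \<noteq> []" using assms by (metis length_recode_word length_0_conv)
  then show ?thesis using assms that by (auto simp: last_conv_nth nth_recode_word)
qed

lemma cancels_last_recode_word:
  assumes g: "\<And>\<zeta> a. g (F \<zeta> a) = a" and ne: "\<delta> \<noteq> []"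
    and c: "cancels (last (recode_word F \<xi> \<delta>)) (F Z b, e)"
  shows "cancels (last \<delta>) (b, e)"
proof -
  obtain Z' where "last (recode_word F \<xi> \<delta>) = (F Z' (fst (last \<delta>)), snd (last \<delta>))"
    using last_recode_word[OF ne] by blast
  then have "F Z' (fst (last \<delta>)) = F Z b" "snd (last \<delta>) \<noteq> e" using c by (auto simp: cancels_def)
  then show ?thesis by (metis g cancels_def fst_conv snd_conv)
qed

lemma recode_word_relabel:
  assumes "\<And>i. i < length \<alpha> \<Longrightarrow> G (edge_tail \<xi> \<alpha> i) (fst (\<alpha> ! i)) = \<sigma> (F (edge_tail \<xi> \<alpha> i) (fst (\<alpha> ! i)))"
  shows "recode_word G \<xi> \<alpha> = map (apfst \<sigma>) (recode_word F \<xi> \<alpha>)"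
  by (rule nth_equalityI) (simp_all add: nth_recode_word assms)

section \<open>Recoding commutes with the shift\<close>

locale convex_shift_space =
  fixes A :: "'s set" and \<Omega> :: "'s word set set"
  assumes convex_subshift: "convex_subshift A \<Omega>"
begin

lemma subset_FG: "\<xi> \<in> \<Omega> \<Longrightarrow> \<xi> \<subseteq> FG A"
  using convex_subshift by (auto simp: convex_subshift_def CC_def convex_def)

lemma subset_reduced: "\<xi> \<in> \<Omega> \<Longrightarrow> \<xi> \<subseteq> Collect reduced"
  using subset_FG by (auto simp: FG_def)

lemma reduced_mem: "\<xi> \<in> \<Omega> \<Longrightarrow> \<alpha> \<in> \<xi> \<Longrightarrow> reduced \<alpha>"
  using subset_reduced by auto

lemma Nil_mem: "\<xi> \<in> \<Omega> \<Longrightarrow> [] \<in> \<xi>"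
  using convex_subshift by (auto simp: convex_subshift_def CC_def convex_def)

lemma drop_mem: "\<xi> \<in> \<Omega> \<Longrightarrow> \<alpha> \<in> \<xi> \<Longrightarrow> drop k \<alpha> \<in> \<xi>"
  using convex_subshift by (auto simp: convex_subshift_def CC_def convex_def)

lemma act_mem: "\<xi> \<in> \<Omega> \<Longrightarrow> \<alpha> \<in> \<xi> \<Longrightarrow> act \<alpha> \<xi> \<in> \<Omega>"
  using convex_subshift by (auto simp: convex_subshift_def)

lemma singleton_mem_act:
  assumes "\<xi> \<in> \<Omega>" "s # \<gamma> \<in> \<xi>"
  shows "[s] \<in> act \<gamma> \<xi>"
proof -
  have r: "reduced (s # \<gamma>)" using assms reduced_mem by blast
  then have "mulw [s] \<gamma> = s # \<gamma>" using mulw_reduced_append[of "[s]" \<gamma>] by simp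
  then show ?thesis using assms r by (subst mem_act[OF subset_reduced]) (auto simp: reduced_Cons)
qed

lemma inv_letter_mem_act: "\<zeta> \<in> \<Omega> \<Longrightarrow> [s] \<in> \<zeta> \<Longrightarrow> [inv_letter s] \<in> act [s] \<zeta>"
  by (subst mem_act[OF subset_reduced]) (auto simp: mulw_singleton_inv_letter Nil_mem)

lemma act_drop_nth:
  assumes "\<xi> \<in> \<Omega>" "\<alpha> \<in> \<xi>" "i < length \<alpha>"
  shows "act (drop i \<alpha>) \<xi> = act [\<alpha> ! i] (act (drop (Suc i) \<alpha>) \<xi>)"
proof -
  have "drop i \<alpha> = [\<alpha> ! i] @ drop (Suc i) \<alpha>" using assms(3) by (simp add: Cons_nth_drop_Suc)
  moreover have "reduced (drop i \<alpha>)" using reduced_mem[OF assms(1,2)] reduced_drop by blast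
  ultimately show ?thesis using act_append[OF subset_reduced[OF assms(1)]] by metis
qed

lemma act_drop_Suc_nth:
  assumes "\<xi> \<in> \<Omega>" "\<alpha> \<in> \<xi>" "i < length \<alpha>"
  shows "act (drop (Suc i) \<alpha>) \<xi> = act [inv_letter (\<alpha> ! i)] (act (drop i \<alpha>) \<xi>)"
  using act_drop_nth[OF assms] act_inv_letter_act[OF subset_reduced[OF act_mem[OF assms(1) drop_mem[OF assms(1,2)]]]]
  by simp

lemma edge_tail_mem:
  assumes \<xi>: "\<xi> \<in> \<Omega>" and \<alpha>: "\<alpha> \<in> \<xi>" and i: "i < length \<alpha>"
  shows "edge_tail \<xi> \<alpha> i \<in> \<Omega>" "[(fst (\<alpha> ! i), True)] \<in> edge_tail \<xi> \<alpha> i"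
proof -
  define \<zeta> where "\<zeta> = act (drop (Suc i) \<alpha>) \<xi>"
  have \<zeta>: "\<zeta> \<in> \<Omega>" using act_mem[OF \<xi> drop_mem[OF \<xi> \<alpha>]] by (simp add: \<zeta>_def)
  have "\<alpha> ! i # drop (Suc i) \<alpha> \<in> \<xi>" using drop_mem[OF \<xi> \<alpha>, of i] i by (simp add: Cons_nth_drop_Suc)
  then have s: "[\<alpha> ! i] \<in> \<zeta>" using singleton_mem_act[OF \<xi>] by (simp add: \<zeta>_def)
  have "act (drop i \<alpha>) \<xi> = act [\<alpha> ! i] \<zeta>" using act_drop_nth[OF \<xi> \<alpha> i] by (simp add: \<zeta>_def)
  then show "edge_tail \<xi> \<alpha> i \<in> \<Omega>" "[(fst (\<alpha> ! i), True)] \<in> edge_tail \<xi> \<alpha> i"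
    using \<zeta> s act_mem[OF \<zeta> s] inv_letter_mem_act[OF \<zeta> s]
    by (cases "\<alpha> ! i"; auto simp: edge_tail_def \<zeta>_def inv_letter_def)+
qed

lemma recode_subset_reduced:
  "(\<And>\<zeta> a. g (F \<zeta> a) = a) \<Longrightarrow> \<xi> \<in> \<Omega> \<Longrightarrow> recode F \<xi> \<subseteq> Collect reduced"
  using reduced_mem reduced_recode_word[of g F] by (auto simp: recode_def)

lemma recode_word_mulw_inv_letter:
  assumes g: "\<And>\<zeta> a. g (F \<zeta> a) = a" and \<zeta>: "\<zeta> \<in> \<Omega>" and s: "[s] \<in> \<zeta>" and \<delta>: "\<delta> \<in> \<zeta>"
  shows "recode_word F (act [s] \<zeta>) (mulw \<delta> [inv_letter s]) =
    mulw (recode_word F \<zeta> \<delta>) (invw (recode_word F \<zeta> [s]))"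
proof -
  define l where "l = (F (if snd s then \<zeta> else act [s] \<zeta>) (fst s), snd s)"
  have cs: "recode_word F \<zeta> [s] = [l]" by (simp add: recode_word_singleton l_def)
  have r\<zeta>: "\<zeta> \<subseteq> Collect reduced" using subset_reduced \<zeta> .
  have r\<delta>: "reduced \<delta>" using \<delta> r\<zeta> by auto
  have rc: "reduced (recode_word F \<zeta> \<delta>)" by (rule reduced_recode_word[of g F, OF g r\<delta>])
  show ?thesis
  proof (cases "\<delta> \<noteq> [] \<and> cancels (last \<delta>) (inv_letter s)")
    case True
    then have "last \<delta> = s" by (cases "last \<delta>", cases s) (auto simp: cancels_def inv_letter_def)
    then obtain v where dv: "\<delta> = v @ [s]" using True by (metis append_butlast_last_id)
    have "recode_word F \<zeta> \<delta> = recode_word F (act [s] \<zeta>) v @ [l]"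
      using recode_word_append[OF r\<zeta>, of v "[s]" F] r\<delta> dv cs by simp
    moreover have "mulw \<delta> [inv_letter s] = v" using mulw_singleton_right[OF r\<delta>] True dv by simp
    ultimately show ?thesis
      using cs rc by (simp add: mulw_singleton_right inv_letter_def cancels_def)
  next
    case False
    have m: "mulw \<delta> [inv_letter s] = \<delta> @ [inv_letter s]" using mulw_singleton_right[OF r\<delta>] False by auto
    have r2: "reduced (\<delta> @ [inv_letter s])" using r\<delta> False by (auto simp: reduced_append)
    have "recode_word F (act [s] \<zeta>) (\<delta> @ [inv_letter s]) =
        recode_word F (act [inv_letter s] (act [s] \<zeta>)) \<delta> @ recode_word F (act [s] \<zeta>) [inv_letter s]"
      by (rule recode_word_append[OF act_subset_reduced[OF r\<zeta>] r2]) simp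
    also have "act [inv_letter s] (act [s] \<zeta>) = \<zeta>" by (rule act_inv_letter_act[OF r\<zeta>])
    also have "recode_word F (act [s] \<zeta>) [inv_letter s] = [inv_letter l]"
      using act_inv_letter_act[OF r\<zeta>, of s]
      by (cases s) (auto simp: recode_word_singleton l_def inv_letter_def)
    finally have e1: "recode_word F (act [s] \<zeta>) (mulw \<delta> [inv_letter s]) = recode_word F \<zeta> \<delta> @ [inv_letter l]"
      using m by simp
    have "\<not> cancels (last (recode_word F \<zeta> \<delta>)) (inv_letter l)" if ne: "\<delta> \<noteq> []"
      using cancels_last_recode_word[of g F, OF g ne, of \<zeta> _ "fst s" "\<not> snd s"] False ne
      by (auto simp: l_def inv_letter_def)
    then have "mulw (recode_word F \<zeta> \<delta>) [inv_letter l] = recode_word F \<zeta> \<delta> @ [inv_letter l]"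
      using mulw_singleton_right[OF rc] by (cases "\<delta> = []") auto
    then show ?thesis using e1 cs by simp
  qed
qed

lemma act_recode_singleton:
  assumes g: "\<And>\<zeta> a. g (F \<zeta> a) = a" and \<zeta>: "\<zeta> \<in> \<Omega>" and s: "[s] \<in> \<zeta>"
  shows "act (recode_word F \<zeta> [s]) (recode F \<zeta>) = recode F (act [s] \<zeta>)"
proof -
  have "act (recode_word F \<zeta> [s]) (recode F \<zeta>) =
      (\<lambda>\<delta>. mulw (recode_word F \<zeta> \<delta>) (invw (recode_word F \<zeta> [s]))) ` \<zeta>"
    by (simp add: act_def recode_def image_image)
  also have "\<dots> = (\<lambda>\<delta>. recode_word F (act [s] \<zeta>) (mulw \<delta> [inv_letter s])) ` \<zeta>"
    using recode_word_mulw_inv_letter[of g F, OF g \<zeta> s] by (simp cong: image_cong)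
  also have "\<dots> = recode F (act [s] \<zeta>)"
    by (simp add: recode_def act_def image_image)
  finally show ?thesis .
qed

lemma act_recode:
  assumes g: "\<And>\<zeta> a. g (F \<zeta> a) = a"
  shows "\<xi> \<in> \<Omega> \<Longrightarrow> \<gamma> \<in> \<xi> \<Longrightarrow> act (recode_word F \<xi> \<gamma>) (recode F \<xi>) = recode F (act \<gamma> \<xi>)"
proof (induction \<gamma>)
  case (Cons s \<gamma>)
  have r\<xi>: "\<xi> \<subseteq> Collect reduced" using subset_reduced Cons.prems(1) .
  have r: "reduced (s # \<gamma>)" using Cons.prems reduced_mem by blast
  have \<gamma>: "\<gamma> \<in> \<xi>" using drop_mem[OF Cons.prems, of 1] by simp
  define \<zeta> where "\<zeta> = act \<gamma> \<xi>"
  have \<zeta>: "\<zeta> \<in> \<Omega>" using act_mem[OF Cons.prems(1) \<gamma>] by (simp add: \<zeta>_def)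
  have s: "[s] \<in> \<zeta>" using singleton_mem_act[OF Cons.prems] by (simp add: \<zeta>_def)
  have split: "recode_word F \<xi> (s # \<gamma>) = recode_word F \<zeta> [s] @ recode_word F \<xi> \<gamma>"
    using recode_word_append[OF r\<xi>, of "[s]" \<gamma> F] r by (simp add: \<zeta>_def)
  have "act (recode_word F \<xi> (s # \<gamma>)) (recode F \<xi>) =
      act (recode_word F \<zeta> [s]) (act (recode_word F \<xi> \<gamma>) (recode F \<xi>))"
    unfolding split using reduced_recode_word[of g F, OF g r, of \<xi>] split
    by (intro act_append recode_subset_reduced[of g F, OF g Cons.prems(1)]) simp
  also have "\<dots> = act (recode_word F \<zeta> [s]) (recode F \<zeta>)"
    using Cons.IH[OF Cons.prems(1) \<gamma>] by (simp add: \<zeta>_def)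
  also have "\<dots> = recode F (act [s] \<zeta>)" by (rule act_recode_singleton[of g F, OF g \<zeta> s])
  also have "act [s] \<zeta> = act (s # \<gamma>) \<xi>"
    using act_append[OF r\<xi>, of "[s]" \<gamma>] r by (simp add: \<zeta>_def)
  finally show ?case .
qed simp

end

section \<open>Balls around the origin\<close>

definition ball_set :: "nat \<Rightarrow> 's word set \<Rightarrow> 's word set" where
  "ball_set n X = {w \<in> X. length w \<le> n}"

lemma ball_conv_ball_set: "ball n X = Abs_fset (ball_set n X)"
  by (simp add: ball_def ball_set_def)

lemma ball_eq_iff_ball_set_eq:
  "finite (ball_set n X) \<Longrightarrow> finite (ball_set n Y) \<Longrightarrow> ball n X = ball n Y \<longleftrightarrow> ball_set n X = ball_set n Y"
  by (simp add: ball_conv_ball_set Abs_fset_inject)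

lemma ball_set_eq_mono: "m \<le> n \<Longrightarrow> ball_set n X = ball_set n Y \<Longrightarrow> ball_set m X = ball_set m Y"
  unfolding ball_set_def set_eq_iff by (metis (mono_tags, lifting) le_trans mem_Collect_eq)

lemma mem_ball_set_1: "w \<in> ball_set 1 X \<longleftrightarrow> w \<in> X \<and> (w = [] \<or> (\<exists>s. w = [s]))"
  by (auto simp: ball_set_def length_Suc_conv le_Suc_eq)

lemma ball_set_recode: "ball_set n (recode F \<zeta>) = recode_word F \<zeta> ` ball_set n \<zeta>"
  by (auto simp: ball_set_def recode_def)

context convex_shift_space
begin

lemma ball_set_0: "\<zeta> \<in> \<Omega> \<Longrightarrow> ball_set 0 \<zeta> = {[]}"
  using Nil_mem by (auto simp: ball_set_def)

lemma ball_set_act_singleton: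
  assumes \<zeta>: "\<zeta> \<in> \<Omega>" "\<zeta>' \<in> \<Omega>" and eq: "ball_set (Suc k) \<zeta> = ball_set (Suc k) \<zeta>'"
  shows "ball_set k (act [s] \<zeta>) = ball_set k (act [s] \<zeta>')"
proof -
  have *: "ball_set k (act [s] X) \<subseteq> ball_set k (act [s] Y)"
    if X: "X \<in> \<Omega>" and Y: "Y \<in> \<Omega>" and eq: "ball_set (Suc k) X = ball_set (Suc k) Y" for X Y
  proof
    fix v assume "v \<in> ball_set k (act [s] X)"
    then have v: "reduced v" "mulw v [s] \<in> X" "length v \<le> k"
      by (auto simp: ball_set_def mem_act[OF subset_reduced[OF X]])
    then have "length (mulw v [s]) \<le> Suc k" by (auto simp: mulw_singleton_right)
    then have "mulw v [s] \<in> ball_set (Suc k) Y" using eq v(2) by (auto simp: ball_set_def)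
    then show "v \<in> ball_set k (act [s] Y)"
      using v by (auto simp: ball_set_def mem_act[OF subset_reduced[OF Y]])
  qed
  show ?thesis using *[OF \<zeta> eq] *[OF \<zeta>(2,1) eq[symmetric]] by blast
qed

definition positive_edges :: "('s word set \<times> 's) set" where
  "positive_edges = {(\<zeta>, a). \<zeta> \<in> \<Omega> \<and> [(a, True)] \<in> \<zeta>}"

lemma positive_singleton_mem_recode:
  assumes "\<zeta> \<in> \<Omega>"
  shows "[(b, True)] \<in> recode F \<zeta> \<longleftrightarrow> (\<exists>a. [(a, True)] \<in> \<zeta> \<and> b = F \<zeta> a)"
proof
  assume "[(b, True)] \<in> recode F \<zeta>"
  then obtain w where w: "w \<in> \<zeta>" "recode_word F \<zeta> w = [(b, True)]" by (auto simp: recode_def)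
  then have "length w = 1" by (metis length_recode_word length_Cons list.size(3) One_nat_def)
  then obtain a e where "w = [(a, e)]" by (cases w) auto
  then show "\<exists>a. [(a, True)] \<in> \<zeta> \<and> b = F \<zeta> a"
    using w by (cases e) (auto simp: recode_word_singleton)
next
  assume "\<exists>a. [(a, True)] \<in> \<zeta> \<and> b = F \<zeta> a"
  then obtain a where "[(a, True)] \<in> \<zeta>" "recode_word F \<zeta> [(a, True)] = [(b, True)]"
    by (auto simp: recode_word_singleton)
  then show "[(b, True)] \<in> recode F \<zeta>" unfolding recode_def by (metis image_eqI)
qed

lemma act_positive_recode:
  assumes g: "\<And>\<zeta> a. g (F \<zeta> a) = a" and "\<zeta> \<in> \<Omega>" "[(a, True)] \<in> \<zeta>"
  shows "act [(F \<zeta> a, True)] (recode F \<zeta>) = recode F (act [(a, True)] \<zeta>)"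
  using act_recode[of g F, OF g assms(2,3)] by (simp add: recode_word_singleton)

lemma recode_subset_FG:
  assumes g: "\<And>\<zeta> a. g (F \<zeta> a) = a" and \<xi>: "\<xi> \<in> \<Omega>"
  shows "recode F \<xi> \<subseteq> FG (case_prod F ` positive_edges)"
proof
  fix w assume "w \<in> recode F \<xi>"
  then obtain \<alpha> where \<alpha>: "\<alpha> \<in> \<xi>" "w = recode_word F \<xi> \<alpha>" by (auto simp: recode_def)
  have "fst (w ! i) \<in> case_prod F ` positive_edges" if "i < length w" for i
    using that \<alpha> edge_tail_mem[OF \<xi> \<alpha>(1)]
    by (auto simp: nth_recode_word positive_edges_def intro!: image_eqI)
  then have "set (map fst w) \<subseteq> case_prod F ` positive_edges"
    by (auto simp: in_set_conv_nth) (metis fst_conv)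
  then show "w \<in> FG (case_prod F ` positive_edges)"
    using reduced_recode_word[of g F, OF g reduced_mem[OF \<xi> \<alpha>(1)]] \<alpha>(2) by (simp add: FG_def)
qed

lemma recode_relabel:
  assumes \<xi>: "\<xi> \<in> \<Omega>" and relabel: "\<And>\<zeta> a. (\<zeta>, a) \<in> positive_edges \<Longrightarrow> G \<zeta> a = \<sigma> (F \<zeta> a)"
  shows "recode G \<xi> = map (apfst \<sigma>) ` recode F \<xi>"
proof -
  have "recode_word G \<xi> \<alpha> = map (apfst \<sigma>) (recode_word F \<xi> \<alpha>)" if "\<alpha> \<in> \<xi>" for \<alpha>
    using relabel edge_tail_mem[OF \<xi> that] by (intro recode_word_relabel) (simp add: positive_edges_def)
  then show ?thesis by (simp add: recode_def image_image cong: image_cong)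
qed

definition separates_balls :: "nat \<Rightarrow> ('s word set \<Rightarrow> 's \<Rightarrow> 't) \<Rightarrow> bool" where
  "separates_balls k F \<longleftrightarrow> (\<forall>\<zeta>\<in>\<Omega>. \<forall>\<zeta>'\<in>\<Omega>. \<forall>a a'. [(a, True)] \<in> \<zeta> \<longrightarrow> [(a', True)] \<in> \<zeta>' \<longrightarrow>
     (F \<zeta> a = F \<zeta>' a' \<longleftrightarrow> a = a' \<and> ball_set k \<zeta> = ball_set k \<zeta>' \<and>
       ball_set k (act [(a, True)] \<zeta>) = ball_set k (act [(a', True)] \<zeta>')))"

lemma separates_ballsD:
  "separates_balls k F \<Longrightarrow> \<zeta> \<in> \<Omega> \<Longrightarrow> \<zeta>' \<in> \<Omega> \<Longrightarrow> [(a, True)] \<in> \<zeta> \<Longrightarrow> [(a', True)] \<in> \<zeta>' \<Longrightarrow>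
    F \<zeta> a = F \<zeta>' a' \<longleftrightarrow> a = a' \<and> ball_set k \<zeta> = ball_set k \<zeta>' \<and>
      ball_set k (act [(a, True)] \<zeta>) = ball_set k (act [(a', True)] \<zeta>')"
  unfolding separates_balls_def by blast

lemma separates_balls_same_labels:
  assumes "separates_balls k F" "separates_balls k G" "e \<in> positive_edges" "e' \<in> positive_edges"
  shows "case_prod F e = case_prod F e' \<longleftrightarrow> case_prod G e = case_prod G e'"
proof -
  obtain \<zeta> a \<zeta>' a' where "e = (\<zeta>, a)" "e' = (\<zeta>', a')" "\<zeta> \<in> \<Omega>" "\<zeta>' \<in> \<Omega>"
    "[(a, True)] \<in> \<zeta>" "[(a', True)] \<in> \<zeta>'"
    using assms(3,4) by (auto simp: positive_edges_def)
  then show ?thesis using separates_ballsD[OF assms(1)] separates_ballsD[OF assms(2)] by simp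
qed

lemma separates_balls_0: "separates_balls 0 (\<lambda>\<zeta> a. a)"
  by (auto simp: separates_balls_def ball_set_0 act_mem)

text \<open>A letter \<open>s\<close> at the origin is recoded by the label of the edge \<open>s\<close> itself; the labels
  of such edges see the \<open>k\<close>-balls at both ends, so the recoded \<open>1\<close>-ball sees the \<open>(k+1)\<close>-ball.\<close>

lemma recode_singleton_eq:
  assumes F: "separates_balls k F" and \<zeta>: "\<zeta> \<in> \<Omega>" "\<zeta>' \<in> \<Omega>" and s: "[s] \<in> \<zeta>" "[s'] \<in> \<zeta>'"
  shows "recode_word F \<zeta> [s] = recode_word F \<zeta>' [s'] \<longleftrightarrow>
    s = s' \<and> ball_set k \<zeta> = ball_set k \<zeta>' \<and> ball_set k (act [s] \<zeta>) = ball_set k (act [s'] \<zeta>')"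
proof -
  obtain b c b' c' where bc: "s = (b, c)" "s' = (b', c')" by fastforce
  show ?thesis
  proof (cases "c = c'")
    case False
    then show ?thesis using bc by (simp add: recode_word_singleton)
  next
    case c: True
    show ?thesis
    proof (cases c)
      case True
      then show ?thesis
        using separates_ballsD[OF F \<zeta>, of b b'] s bc c by (auto simp: recode_word_singleton)
    next
      case False
      have \<zeta>1: "act [s] \<zeta> \<in> \<Omega>" "act [s'] \<zeta>' \<in> \<Omega>" using act_mem \<zeta> s by auto
      have pos: "[(b, True)] \<in> act [s] \<zeta>" "[(b', True)] \<in> act [s'] \<zeta>'"
        using inv_letter_mem_act[OF \<zeta>(1) s(1)] inv_letter_mem_act[OF \<zeta>(2) s(2)] bc c False
        by (auto simp: inv_letter_def)
      have act_back: "act [(b, True)] (act [s] \<zeta>) = \<zeta>" "act [(b', True)] (act [s'] \<zeta>') = \<zeta>'"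
        using act_inv_letter_act[OF subset_reduced[OF \<zeta>(1)], of s]
          act_inv_letter_act[OF subset_reduced[OF \<zeta>(2)], of s'] bc c False
        by (auto simp: inv_letter_def)
      have "recode_word F \<zeta> [s] = recode_word F \<zeta>' [s'] \<longleftrightarrow> F (act [s] \<zeta>) b = F (act [s'] \<zeta>') b'"
        using bc c False by (simp add: recode_word_singleton)
      also have "\<dots> \<longleftrightarrow> b = b' \<and> ball_set k (act [s] \<zeta>) = ball_set k (act [s'] \<zeta>') \<and>
          ball_set k \<zeta> = ball_set k \<zeta>'"
        using separates_ballsD[OF F \<zeta>1 pos] by (simp only: act_back)
      finally show ?thesis using bc c by auto
    qed
  qed
qed

lemma ball_set_1_recode_subset:
  assumes F: "separates_balls k F" and \<zeta>: "\<zeta> \<in> \<Omega>" "\<zeta>' \<in> \<Omega>"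
    and eq: "ball_set (Suc k) \<zeta> = ball_set (Suc k) \<zeta>'"
  shows "ball_set 1 (recode F \<zeta>) \<subseteq> ball_set 1 (recode F \<zeta>')"
proof
  fix x assume "x \<in> ball_set 1 (recode F \<zeta>)"
  then obtain w where w: "w \<in> ball_set 1 \<zeta>" "x = recode_word F \<zeta> w" by (auto simp: ball_set_recode)
  have w': "w \<in> ball_set 1 \<zeta>'" using w ball_set_eq_mono[OF _ eq, of 1] by simp
  have "recode_word F \<zeta> w = recode_word F \<zeta>' w"
  proof (cases "w = []")
    case False
    then obtain s where s: "w = [s]" using w mem_ball_set_1 by blast
    then have "[s] \<in> \<zeta>" "[s] \<in> \<zeta>'" using w w' by (auto simp: ball_set_def)
    then show ?thesis
      using s recode_singleton_eq[OF F \<zeta>] ball_set_eq_mono[OF _ eq, of k]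
        ball_set_act_singleton[OF \<zeta> eq, of s]
      by simp
  qed simp
  then show "x \<in> ball_set 1 (recode F \<zeta>')" using w w' by (auto simp: ball_set_recode)
qed

lemma ball_set_Suc_subset:
  assumes F: "separates_balls k F" and \<zeta>: "\<zeta> \<in> \<Omega>" "\<zeta>' \<in> \<Omega>"
    and sub: "ball_set 1 (recode F \<zeta>) \<subseteq> ball_set 1 (recode F \<zeta>')"
  shows "ball_set (Suc k) \<zeta> \<subseteq> ball_set (Suc k) \<zeta>'"
proof
  fix w assume "w \<in> ball_set (Suc k) \<zeta>"
  then have w: "w \<in> \<zeta>" "length w \<le> Suc k" by (auto simp: ball_set_def)
  show "w \<in> ball_set (Suc k) \<zeta>'"
  proof (cases w rule: rev_exhaust)
    case Nil
    then show ?thesis using Nil_mem[OF \<zeta>(2)] by (simp add: ball_set_def)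
  next
    case (snoc v s)
    have rw: "reduced w" using reduced_mem[OF \<zeta>(1) w(1)] .
    have s: "[s] \<in> \<zeta>" using drop_mem[OF \<zeta>(1) w(1), of "length v"] snoc by simp
    have mv: "mulw v [s] = v @ [s]" using rw snoc mulw_reduced_append by simp
    have "recode_word F \<zeta> [s] \<in> ball_set 1 (recode F \<zeta>)"
      using s by (auto simp: recode_def ball_set_def)
    then have "recode_word F \<zeta> [s] \<in> ball_set 1 (recode F \<zeta>')" using sub by blast
    then obtain w' where w': "w' \<in> \<zeta>'" "recode_word F \<zeta>' w' = recode_word F \<zeta> [s]"
      by (auto simp: ball_set_def recode_def)
    moreover have "length w' = 1" using arg_cong[OF w'(2), of length] by simp
    ultimately obtain s' where s': "[s'] \<in> \<zeta>'" "recode_word F \<zeta>' [s'] = recode_word F \<zeta> [s]"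
      by (cases w') auto
    have "s = s'" and act_eq: "ball_set k (act [s] \<zeta>) = ball_set k (act [s] \<zeta>')"
      using recode_singleton_eq[OF F \<zeta> s s'(1)] s'(2)[symmetric] by blast+
    have "v \<in> ball_set k (act [s] \<zeta>)" using rw mv w snoc
      by (auto simp: ball_set_def mem_act[OF subset_reduced[OF \<zeta>(1)]] reduced_append)
    then have "v \<in> act [s] \<zeta>'" using act_eq by (auto simp: ball_set_def)
    then have "v @ [s] \<in> \<zeta>'" using mv by (simp add: mem_act[OF subset_reduced[OF \<zeta>(2)]])
    then show ?thesis using snoc w(2) by (simp add: ball_set_def)
  qed
qed

lemma ball_set_1_recode_eq_iff:
  assumes "separates_balls k F" "\<zeta> \<in> \<Omega>" "\<zeta>' \<in> \<Omega>"
  shows "ball_set 1 (recode F \<zeta>) = ball_set 1 (recode F \<zeta>') \<longleftrightarrow> ball_set (Suc k) \<zeta> = ball_set (Suc k) \<zeta>'"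
  using ball_set_Suc_subset[OF assms] ball_set_Suc_subset[OF assms(1,3,2)]
    ball_set_1_recode_subset[OF assms] ball_set_1_recode_subset[OF assms(1,3,2)]
  by blast

end

section \<open>Ball symbols and their iterates\<close>

definition ball_label :: "nat \<Rightarrow> 'a sym word set \<Rightarrow> 'a sym \<Rightarrow> 'a sym" where
  "ball_label n \<zeta> a = Tri (ball n (act [(a, True)] \<zeta>)) a (ball n \<zeta>)"

text \<open>The \<open>1\<close>-ball symbol of the edge labelled \<open>F \<zeta> a\<close> in \<open>recode F \<zeta>\<close>.\<close>

definition ball1_relabel ::
    "('a sym word set \<Rightarrow> 'a sym \<Rightarrow> 'a sym) \<Rightarrow> 'a sym word set \<Rightarrow> 'a sym \<Rightarrow> 'a sym" where
  "ball1_relabel F \<zeta> a = Tri (ball 1 (recode F (act [(a, True)] \<zeta>))) (F \<zeta> a) (ball 1 (recode F \<zeta>))"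

fun iter_label :: "nat \<Rightarrow> 'a sym word set \<Rightarrow> 'a sym \<Rightarrow> 'a sym" where
  "iter_label 0 = (\<lambda>\<zeta> a. a)"
| "iter_label (Suc k) = ball1_relabel (iter_label k)"

fun tri_letter :: "'a sym \<Rightarrow> 'a sym" where
  "tri_letter (Tri B a B') = a"
| "tri_letter (Base x) = Base x"

lemma tri_letter_ball_label: "tri_letter (ball_label n \<zeta> a) = a"
  by (simp add: ball_label_def)

lemma tri_letter_iter_label: "(tri_letter ^^ k) (iter_label k \<zeta> a) = a"
  by (induction k arbitrary: \<zeta> a) (simp_all add: ball1_relabel_def funpow_Suc_right del: funpow.simps)

locale finite_convex_shift_space = convex_shift_space A \<Omega> for A :: "'a sym set" and \<Omega> +
  assumes finite_alphabet: "finite A"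
begin

lemma finite_ball_set: "\<zeta> \<in> \<Omega> \<Longrightarrow> finite (ball_set n \<zeta>)"
proof -
  assume "\<zeta> \<in> \<Omega>"
  then have "ball_set n \<zeta> \<subseteq> {xs. set xs \<subseteq> A \<times> UNIV \<and> length xs \<le> n}"
    using subset_FG by (force simp: ball_set_def FG_def)
  moreover have "finite {xs. set xs \<subseteq> A \<times> (UNIV :: bool set) \<and> length xs \<le> n}"
    by (rule finite_lists_length_le) (simp add: finite_alphabet)
  ultimately show ?thesis by (rule finite_subset)
qed

lemma ball_recode_eq_iff:
  "\<zeta> \<in> \<Omega> \<Longrightarrow> \<zeta>' \<in> \<Omega> \<Longrightarrow>
    ball n (recode F \<zeta>) = ball n (recode F \<zeta>') \<longleftrightarrow> ball_set n (recode F \<zeta>) = ball_set n (recode F \<zeta>')"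
  by (simp add: ball_eq_iff_ball_set_eq ball_set_recode finite_ball_set)

lemma separates_balls_ball_label: "separates_balls n (ball_label n)"
  unfolding separates_balls_def
proof (intro ballI allI impI)
  fix \<zeta> \<zeta>' a a' assume \<zeta>: "\<zeta> \<in> \<Omega>" "\<zeta>' \<in> \<Omega>" and a: "[(a, True)] \<in> \<zeta>" "[(a', True)] \<in> \<zeta>'"
  have "act [(a, True)] \<zeta> \<in> \<Omega>" "act [(a', True)] \<zeta>' \<in> \<Omega>" using act_mem \<zeta> a by auto
  then show "ball_label n \<zeta> a = ball_label n \<zeta>' a' \<longleftrightarrow> a = a' \<and> ball_set n \<zeta> = ball_set n \<zeta>' \<and>
      ball_set n (act [(a, True)] \<zeta>) = ball_set n (act [(a', True)] \<zeta>')"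
    using \<zeta> by (auto simp: ball_label_def ball_eq_iff_ball_set_eq finite_ball_set)
qed

lemma separates_balls_ball1_relabel:
  assumes F: "separates_balls k F"
  shows "separates_balls (Suc k) (ball1_relabel F)"
  unfolding separates_balls_def
proof (intro ballI allI impI)
  fix \<zeta> \<zeta>' a a' assume \<zeta>: "\<zeta> \<in> \<Omega>" "\<zeta>' \<in> \<Omega>" and a: "[(a, True)] \<in> \<zeta>" "[(a', True)] \<in> \<zeta>'"
  have \<zeta>1: "act [(a, True)] \<zeta> \<in> \<Omega>" "act [(a', True)] \<zeta>' \<in> \<Omega>" using act_mem \<zeta> a by auto
  have "ball1_relabel F \<zeta> a = ball1_relabel F \<zeta>' a' \<longleftrightarrow>
      ball_set (Suc k) (act [(a, True)] \<zeta>) = ball_set (Suc k) (act [(a', True)] \<zeta>') \<and>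
      (a = a' \<and> ball_set k \<zeta> = ball_set k \<zeta>' \<and>
        ball_set k (act [(a, True)] \<zeta>) = ball_set k (act [(a', True)] \<zeta>')) \<and>
      ball_set (Suc k) \<zeta> = ball_set (Suc k) \<zeta>'"
    unfolding ball1_relabel_def sym.inject ball_recode_eq_iff[OF \<zeta>1] ball_recode_eq_iff[OF \<zeta>]
      ball_set_1_recode_eq_iff[OF F \<zeta>1] ball_set_1_recode_eq_iff[OF F \<zeta>] separates_ballsD[OF F \<zeta> a]
    by auto
  also have "\<dots> \<longleftrightarrow> a = a' \<and> ball_set (Suc k) \<zeta> = ball_set (Suc k) \<zeta>' \<and>
      ball_set (Suc k) (act [(a, True)] \<zeta>) = ball_set (Suc k) (act [(a', True)] \<zeta>')"
    using ball_set_eq_mono[of k "Suc k"] by auto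
  finally show "ball1_relabel F \<zeta> a = ball1_relabel F \<zeta>' a' \<longleftrightarrow> a = a' \<and>
      ball_set (Suc k) \<zeta> = ball_set (Suc k) \<zeta>' \<and>
      ball_set (Suc k) (act [(a, True)] \<zeta>) = ball_set (Suc k) (act [(a', True)] \<zeta>')" .
qed

lemma separates_balls_iter_label: "separates_balls k (iter_label k)"
  by (induction k) (simp_all add: separates_balls_0 separates_balls_ball1_relabel)

lemma phiw_eq_recode_word:
  assumes \<xi>: "\<xi> \<in> \<Omega>" and \<alpha>: "\<alpha> \<in> \<xi>"
  shows "phiw n \<xi> \<alpha> = recode_word (ball_label n) \<xi> \<alpha>"
proof (rule nth_equalityI)
  fix i assume "i < length (phiw n \<xi> \<alpha>)"
  then have i: "i < length \<alpha>" by (simp add: phiw_def)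
  obtain b e where be: "\<alpha> ! i = (b, e)" by fastforce
  show "phiw n \<xi> \<alpha> ! i = recode_word (ball_label n) \<xi> \<alpha> ! i"
  proof (cases e)
    case True
    then show ?thesis using i be act_drop_nth[OF \<xi> \<alpha> i]
      by (simp add: phiw_def nth_recode_word edge_tail_def ball_label_def)
  next
    case False
    then show ?thesis using i be act_drop_Suc_nth[OF \<xi> \<alpha> i]
      by (simp add: phiw_def nth_recode_word edge_tail_def ball_label_def inv_letter_def)
  qed
qed (simp add: phiw_def)

lemma ball_shift_eq_recode: "ball_shift n \<Omega> = recode (ball_label n) ` \<Omega>"
  by (simp add: ball_shift_def phi_def recode_def phiw_eq_recode_word cong: image_cong)

lemma phi_1_recode:
  assumes g: "\<And>\<zeta> a. g (F \<zeta> a) = a" and \<xi>: "\<xi> \<in> \<Omega>"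
  shows "phi 1 (recode F \<xi>) = recode (ball1_relabel F) \<xi>"
proof -
  have "phiw 1 (recode F \<xi>) (recode_word F \<xi> \<alpha>) = recode_word (ball1_relabel F) \<xi> \<alpha>" if \<alpha>: "\<alpha> \<in> \<xi>" for \<alpha>
  proof (rule nth_equalityI)
    fix i assume "i < length (phiw 1 (recode F \<xi>) (recode_word F \<xi> \<alpha>))"
    then have i: "i < length \<alpha>" by (simp add: phiw_def)
    have act_drop: "act (drop j (recode_word F \<xi> \<alpha>)) (recode F \<xi>) = recode F (act (drop j \<alpha>) \<xi>)" for j
      by (simp add: drop_recode_word act_recode[of g F, OF g \<xi> drop_mem[OF \<xi> \<alpha>]])
    obtain b e where be: "\<alpha> ! i = (b, e)" by fastforce
    show "phiw 1 (recode F \<xi>) (recode_word F \<xi> \<alpha>) ! i = recode_word (ball1_relabel F) \<xi> \<alpha> ! i"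
    proof (cases e)
      case True
      then show ?thesis using i be act_drop_nth[OF \<xi> \<alpha> i] act_drop
        by (simp add: phiw_def nth_recode_word edge_tail_def ball1_relabel_def)
    next
      case False
      then show ?thesis using i be act_drop_Suc_nth[OF \<xi> \<alpha> i] act_drop
        by (simp add: phiw_def nth_recode_word edge_tail_def ball1_relabel_def inv_letter_def)
    qed
  qed (simp add: phiw_def)
  then show ?thesis by (simp add: phi_def recode_def image_image cong: image_cong)
qed

lemma ball_alph_1_recode:
  assumes g: "\<And>\<zeta> a. g (F \<zeta> a) = a" and labels: "case_prod F ` positive_edges \<subseteq> X"
  shows "ball_alph 1 X (recode F ` \<Omega>) = case_prod (ball1_relabel F) ` positive_edges"
proof (rule set_eqI, rule iffI)
  fix x assume "x \<in> ball_alph 1 X (recode F ` \<Omega>)"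
  then obtain \<eta> b where \<eta>: "\<eta> \<in> recode F ` \<Omega>" "[(b, True)] \<in> \<eta>"
    and x: "x = Tri (ball 1 (act [(b, True)] \<eta>)) b (ball 1 \<eta>)"
    unfolding ball_alph_def by blast
  then obtain \<zeta> where \<zeta>: "\<zeta> \<in> \<Omega>" "[(b, True)] \<in> recode F \<zeta>"
    and x: "x = Tri (ball 1 (act [(b, True)] (recode F \<zeta>))) b (ball 1 (recode F \<zeta>))"
    by blast
  obtain a where a: "[(a, True)] \<in> \<zeta>" "b = F \<zeta> a"
    using positive_singleton_mem_recode[OF \<zeta>(1), of b F] \<zeta>(2) by blast
  have "x = ball1_relabel F \<zeta> a"
    using x a act_positive_recode[of g F, OF g \<zeta>(1) a(1)] by (simp add: ball1_relabel_def)
  then show "x \<in> case_prod (ball1_relabel F) ` positive_edges"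
    using \<zeta>(1) a(1) by (intro image_eqI[of _ _ "(\<zeta>, a)"]) (auto simp: positive_edges_def)
next
  fix x assume "x \<in> case_prod (ball1_relabel F) ` positive_edges"
  then obtain e where "e \<in> positive_edges" "x = case_prod (ball1_relabel F) e" by (rule imageE)
  then obtain \<zeta> a where \<zeta>: "\<zeta> \<in> \<Omega>" "[(a, True)] \<in> \<zeta>" and x: "x = ball1_relabel F \<zeta> a"
    by (cases e) (auto simp: positive_edges_def)
  have "[(F \<zeta> a, True)] \<in> recode F \<zeta>"
    using positive_singleton_mem_recode[OF \<zeta>(1), of "F \<zeta> a" F] \<zeta>(2) by blast
  moreover have "F \<zeta> a \<in> X"
    using \<zeta> by (intro subsetD[OF labels] image_eqI[of _ _ "(\<zeta>, a)"]) (auto simp: positive_edges_def)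
  moreover have "x = Tri (ball 1 (act [(F \<zeta> a, True)] (recode F \<zeta>))) (F \<zeta> a) (ball 1 (recode F \<zeta>))"
    using x act_positive_recode[of g F, OF g \<zeta>] by (simp add: ball1_relabel_def)
  ultimately show "x \<in> ball_alph 1 X (recode F ` \<Omega>)"
    unfolding ball_alph_def mem_Collect_eq
    by (intro exI[of _ "recode F \<zeta>"] exI[of _ "F \<zeta> a"] conjI imageI \<zeta>(1))
qed

lemma ball1_step_iterate:
  "(ball1_step ^^ k) (A, \<Omega>) =
     (if k = 0 then A else case_prod (iter_label k) ` positive_edges, recode (iter_label k) ` \<Omega>)"
proof (induction k)
  case 0
  then show ?case by (simp add: recode_def recode_word_id)
next
  case (Suc k)
  let ?X = "fst ((ball1_step ^^ k) (A, \<Omega>))"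
  have labels: "case_prod (iter_label k) ` positive_edges \<subseteq> ?X"
  proof (cases "k = 0")
    case True
    then show ?thesis using Suc.IH subset_FG by (force simp: positive_edges_def FG_def)
  qed (use Suc.IH in simp)
  have "snd ((ball1_step ^^ k) (A, \<Omega>)) = recode (iter_label k) ` \<Omega>" using Suc.IH by simp
  then have "(ball1_step ^^ Suc k) (A, \<Omega>) =
      (ball_alph 1 ?X (recode (iter_label k) ` \<Omega>), ball_shift 1 (recode (iter_label k) ` \<Omega>))"
    by (simp only: funpow.simps comp_apply ball1_step_def)
  also have "ball_alph 1 ?X (recode (iter_label k) ` \<Omega>) = case_prod (iter_label (Suc k)) ` positive_edges"
    using ball_alph_1_recode[of "tri_letter ^^ k", OF tri_letter_iter_label labels] by simp
  also have "ball_shift 1 (recode (iter_label k) ` \<Omega>) = recode (iter_label (Suc k)) ` \<Omega>"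
    using phi_1_recode[of "tri_letter ^^ k" "iter_label k", OF tri_letter_iter_label] by (simp add: ball_shift_def image_image cong: image_cong)
  finally show ?case by simp
qed

lemma ball_alph_eq: "ball_alph n A \<Omega> = case_prod (ball_label n) ` positive_edges"
proof (rule set_eqI, rule iffI)
  fix x assume "x \<in> ball_alph n A \<Omega>"
  then obtain \<zeta> a where "\<zeta> \<in> \<Omega>" "[(a, True)] \<in> \<zeta>" "x = ball_label n \<zeta> a"
    unfolding ball_alph_def ball_label_def by blast
  then show "x \<in> case_prod (ball_label n) ` positive_edges"
    by (intro image_eqI[of _ _ "(\<zeta>, a)"]) (auto simp: positive_edges_def)
next
  fix x assume "x \<in> case_prod (ball_label n) ` positive_edges"
  then obtain e where "e \<in> positive_edges" "x = case_prod (ball_label n) e" by (rule imageE)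
  then obtain \<zeta> a where \<zeta>: "\<zeta> \<in> \<Omega>" "[(a, True)] \<in> \<zeta>" and x: "x = ball_label n \<zeta> a"
    by (cases e) (auto simp: positive_edges_def)
  have "a \<in> A" using subset_FG[OF \<zeta>(1)] \<zeta>(2) by (auto simp: FG_def)
  then show "x \<in> ball_alph n A \<Omega>" using \<zeta> x unfolding ball_alph_def ball_label_def by blast
qed

end

lemma obtain_inj_on_factor:
  assumes "\<And>x y. x \<in> V \<Longrightarrow> y \<in> V \<Longrightarrow> f x = f y \<longleftrightarrow> g x = g y"
  obtains \<sigma> where "inj_on \<sigma> (f ` V)" and "\<And>x. x \<in> V \<Longrightarrow> \<sigma> (f x) = g x"
proof
  show "(g \<circ> inv_into V f) (f x) = g x" if "x \<in> V" for x
    using assms[OF inv_into_into[of "f x" f V] that] that by (simp add: f_inv_into_f)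
  then show "inj_on (g \<circ> inv_into V f) (f ` V)"
    using assms by (auto simp: inj_on_def)
qed

theorem (in finite_convex_shift_space) conjugate_ball_shift_ball1_iterate:
  fixes n :: nat
  assumes "n \<ge> 1"
  shows "conjugate (ball_alph n A \<Omega>) (ball_shift n \<Omega>)
           (fst ((ball1_step ^^ n) (A, \<Omega>))) (snd ((ball1_step ^^ n) (A, \<Omega>)))"
proof -
  have same_labels: "case_prod (ball_label n) e = case_prod (ball_label n) e' \<longleftrightarrow>
      case_prod (iter_label n) e = case_prod (iter_label n) e'"
    if "e \<in> positive_edges" "e' \<in> positive_edges" for e e'
    using separates_balls_same_labels[OF separates_balls_ball_label separates_balls_iter_label that] .
  obtain \<sigma> where inj: "inj_on \<sigma> (case_prod (ball_label n) ` positive_edges)"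
    and \<sigma>: "\<And>e. e \<in> positive_edges \<Longrightarrow> \<sigma> (case_prod (ball_label n) e) = case_prod (iter_label n) e"
    using obtain_inj_on_factor[of positive_edges "case_prod (ball_label n)" "case_prod (iter_label n)",
        OF same_labels] by blast
  have letters: "fst ((ball1_step ^^ n) (A, \<Omega>)) = \<sigma> ` ball_alph n A \<Omega>"
    using assms \<sigma> by (simp add: ball1_step_iterate ball_alph_eq image_image cong: image_cong)
  have "recode (iter_label n) \<xi> = map (apfst \<sigma>) ` recode (ball_label n) \<xi>" if "\<xi> \<in> \<Omega>" for \<xi>
  proof (rule recode_relabel[OF that])
    fix \<zeta> a assume "(\<zeta>, a) \<in> positive_edges"
    then show "iter_label n \<zeta> a = \<sigma> (ball_label n \<zeta> a)" using \<sigma> by fastforce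
  qed
  then have shift: "snd ((ball1_step ^^ n) (A, \<Omega>)) = (\<lambda>\<eta>. map (apfst \<sigma>) ` \<eta>) ` ball_shift n \<Omega>"
    by (simp add: ball1_step_iterate ball_shift_eq_recode image_image cong: image_cong)
  show ?thesis
    unfolding letters shift ball_alph_eq
    using inj recode_subset_FG[of tri_letter "ball_label n", OF tri_letter_ball_label]
    by (intro conjugate_relabel) (auto simp: ball_shift_eq_recode)
qed

theorem proposition3:
  fixes A :: "'a sym set" and \<Omega> :: "'a sym word set set" and n :: nat
  assumes "finite A"
    and "convex_subshift A \<Omega>"
    and "n \<ge> 1"
  shows "conjugate (ball_alph n A \<Omega>) (ball_shift n \<Omega>)
                   (fst ((ball1_step ^^ n) (A, \<Omega>))) (snd ((ball1_step ^^ n) (A, \<Omega>)))"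
proof -
  interpret finite_convex_shift_space A \<Omega>
    by unfold_locales (use assms(1,2) in simp_all)
  show ?thesis using assms(3) by (rule conjugate_ball_shift_ball1_iterate)
qed

end
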